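(* Let $-A$ be the generator of a bounded $C_0$-semigroup $(T(s))_{s\ge0}$ on a Banach space $X$. Suppose $\varphi:(0,\infty)\to(0,\infty)$ satisfies $\varphi(t)\searrow0$ as $t\to\infty$ and \[\|\mathcal C_t(A)x\|=O(\varphi(t))\quad(t\to\infty)\quad\text{for every }x\in\operatorname{dom}_\infty(A):=\bigcap_{n\ge0}\operatorname{dom}(A^n).\] Then $A$ is invertible (i.e. has a bounded inverse defined on all of $X$).
   Context: Cesàro means: $\mathcal C_t(A)x=\frac1t\int_0^tT(s)x\,\mathrm ds$ for $t>0$, $x\in X$. *)

theory Defs
  imports "HOL-Analysis.Analysis" "HOL-Library.Landau_Symbols"
begin

definition c0_semigroup :: "(real \<Rightarrow> ('a::banach \<Rightarrow>\<^sub>L 'a)) \<Rightarrow> bool" where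
  "c0_semigroup T \<longleftrightarrow>
     T 0 = id_blinfun \<and>
     (\<forall>s t. 0 \<le> s \<longrightarrow> 0 \<le> t \<longrightarrow> T (s + t) = T s o\<^sub>L T t) \<and>
     (\<forall>x. continuous_on {0..} (\<lambda>s. blinfun_apply (T s) x))"

definition bounded_semigroup :: "(real \<Rightarrow> ('a::real_normed_vector \<Rightarrow>\<^sub>L 'a)) \<Rightarrow> bool" where
  "bounded_semigroup T \<longleftrightarrow> (\<exists>M. \<forall>s\<ge>0. norm (T s) \<le> M)"

definition gen_dom :: "(real \<Rightarrow> ('a::real_normed_vector \<Rightarrow>\<^sub>L 'a)) \<Rightarrow> 'a set" where
  "gen_dom T = {x. \<exists>y. ((\<lambda>h. (1 / h) *\<^sub>R (blinfun_apply (T h) x - x)) \<longlongrightarrow> y) (at_right 0)}"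

definition generator :: "(real \<Rightarrow> ('a::real_normed_vector \<Rightarrow>\<^sub>L 'a)) \<Rightarrow> 'a \<Rightarrow> 'a" where
  "generator T x = Lim (at_right 0) (\<lambda>h. (1 / h) *\<^sub>R (blinfun_apply (T h) x - x))"

fun dom_pow :: "'a set \<Rightarrow> ('a \<Rightarrow> 'a) \<Rightarrow> nat \<Rightarrow> 'a set" where
  "dom_pow D A 0 = UNIV"
| "dom_pow D A (Suc n) = {x \<in> D. A x \<in> dom_pow D A n}"

definition dom_inf :: "'a set \<Rightarrow> ('a \<Rightarrow> 'a) \<Rightarrow> 'a set" where
  "dom_inf D A = (\<Inter>n. dom_pow D A n)"

definition cesaro :: "(real \<Rightarrow> ('a::banach \<Rightarrow>\<^sub>L 'a)) \<Rightarrow> real \<Rightarrow> 'a \<Rightarrow> 'a" where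
  "cesaro T t x = (1 / t) *\<^sub>R integral {0..t} (\<lambda>s. blinfun_apply (T s) x)"

end

theory Submission
  imports Defs "HOL-Computational_Algebra.Polynomial"
begin

(* Fix a smooth rho supported in [0,1] with integral 1 and the mollifier
   J x = int_0^1 rho(s) T(s) x ds.  Integration by parts gives A J_rho = J_rho', so J maps X
   boundedly into dom_inf A.  The uniform boundedness principle turns the pointwise decay of
   C_t J x into norm (C_t J) <= K phi(t), so E = C_t J has norm <= 1/2 for some t, and I - E has
   a bounded inverse.  Averaging the orbit integral V x s = int_0^s T(r) x dr yields a bounded Q
   with A Q = I - E, so Q (I - E)^-1 is a right inverse of A; A is injective because its kernel
   consists of T-fixed vectors, which are E-fixed. *)

section \<open>Smooth test functions\<close>

fun Ck :: "nat \<Rightarrow> (real \<Rightarrow> real) \<Rightarrow> bool" where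
  "Ck 0 f \<longleftrightarrow> True"
| "Ck (Suc k) f \<longleftrightarrow> (\<forall>x. f differentiable (at x)) \<and> Ck k (deriv f)"

definition smooth :: "(real \<Rightarrow> real) \<Rightarrow> bool" where
  "smooth f \<longleftrightarrow> (\<forall>k. Ck k f)"

lemma Ck_Suc_imp: "Ck (Suc k) f \<Longrightarrow> Ck k f"
  by (induction k arbitrary: f) auto

lemma deriv_fun_eq: "(\<And>x. DERIV f x :> g x) \<Longrightarrow> deriv f = g"
  using DERIV_imp_deriv by blast

lemma Ck_DERIV: "Ck (Suc k) f \<Longrightarrow> DERIV f x :> deriv f x"
  by (simp add: DERIV_deriv_iff_real_differentiable)

lemma Ck_add: "Ck k f \<Longrightarrow> Ck k g \<Longrightarrow> Ck k (\<lambda>x. f x + g x)"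
proof (induction k arbitrary: f g)
  case (Suc k)
  have "deriv (\<lambda>x. f x + g x) = (\<lambda>x. deriv f x + deriv g x)"
    by (intro deriv_fun_eq DERIV_add Ck_DERIV[OF Suc.prems(1)] Ck_DERIV[OF Suc.prems(2)])
  then show ?case using Suc by auto
qed simp

lemma Ck_cmult: "Ck k f \<Longrightarrow> Ck k (\<lambda>x. c * f x)"
proof (induction k arbitrary: f)
  case (Suc k)
  have "deriv (\<lambda>x. c * f x) = (\<lambda>x. c * deriv f x)"
    by (intro deriv_fun_eq DERIV_cmult Ck_DERIV[OF Suc.prems])
  then show ?case using Suc by auto
qed simp

lemma Ck_mult: "Ck k f \<Longrightarrow> Ck k g \<Longrightarrow> Ck k (\<lambda>x. f x * g x)"
proof (induction k arbitrary: f g)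
  case (Suc k)
  have d: "DERIV (\<lambda>x. f x * g x) x :> deriv f x * g x + deriv g x * f x" for x
    by (rule DERIV_mult[OF Ck_DERIV[OF Suc.prems(1)] Ck_DERIV[OF Suc.prems(2)]])
  then have "deriv (\<lambda>x. f x * g x) = (\<lambda>x. deriv f x * g x + deriv g x * f x)"
    by (rule deriv_fun_eq)
  moreover have "Ck k (\<lambda>x. deriv f x * g x + deriv g x * f x)"
    using Suc.prems by (intro Ck_add Suc.IH) (auto intro: Ck_Suc_imp)
  moreover have "\<forall>x. (\<lambda>x. f x * g x) differentiable (at x)"
    using d real_differentiable_def by blast
  ultimately show ?case by simp
qed simp

lemma Ck_affine: "Ck k f \<Longrightarrow> Ck k (\<lambda>x. f (a * x + b))"
proof (induction k arbitrary: f)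
  case (Suc k)
  have d: "DERIV (\<lambda>x. f (a * x + b)) x :> deriv f (a * x + b) * a" for x
    by (rule DERIV_chain2[OF Ck_DERIV[OF Suc.prems]]) (auto intro!: derivative_eq_intros)
  then have "deriv (\<lambda>x. f (a * x + b)) = (\<lambda>x. a * deriv f (a * x + b))"
    by (intro deriv_fun_eq) (simp add: mult.commute)
  moreover have "Ck k (\<lambda>x. a * deriv f (a * x + b))"
    using Ck_cmult[OF Suc.IH[of "deriv f"]] Suc.prems by simp
  moreover have "\<forall>x. (\<lambda>x. f (a * x + b)) differentiable (at x)"
    using d real_differentiable_def by blast
  ultimately show ?case by simp
qed simp

lemma smooth_deriv: "smooth f \<Longrightarrow> smooth (deriv f)"
  unfolding smooth_def by (metis Ck.simps(2))

lemma smooth_DERIV: "smooth f \<Longrightarrow> DERIV f x :> deriv f x"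
  unfolding smooth_def by (rule Ck_DERIV) blast

lemma smooth_continuous_on: "smooth f \<Longrightarrow> continuous_on S f"
  by (intro continuous_at_imp_continuous_on ballI DERIV_isCont[OF smooth_DERIV])

lemma smooth_cmult: "smooth f \<Longrightarrow> smooth (\<lambda>x. c * f x)"
  unfolding smooth_def using Ck_cmult by blast

(* flat p s = p(1/s) exp(-1/s) for s > 0 and 0 otherwise.  Its derivative has the same
   shape, with p replaced by flat_poly p = X^2 (p - p'), so every flat p is smooth. *)
definition flat :: "real poly \<Rightarrow> real \<Rightarrow> real" where
  "flat p s = (if s \<le> 0 then 0 else poly p (1/s) * exp (-1/s))"

definition flat_poly :: "real poly \<Rightarrow> real poly" where
  "flat_poly p = [:0, 0, 1:] * (p - pderiv p)"

(* Polynomials are dominated by the exponential; this makes flat p flat at 0. *)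
lemma poly_times_exp_tendsto_0: "((\<lambda>y::real. poly q y * exp (-y)) \<longlongrightarrow> 0) at_top"
proof -
  have "((\<lambda>y. \<Sum>i\<le>degree q. coeff q i * (y ^ i / exp y)) \<longlongrightarrow> (\<Sum>i\<le>degree q. coeff q i * 0)) at_top"
    by (intro tendsto_sum tendsto_mult tendsto_const tendsto_power_div_exp_0)
  moreover have "(\<lambda>y. \<Sum>i\<le>degree q. coeff q i * (y ^ i / exp y)) = (\<lambda>y. poly q y * exp (-y))"
    by (auto simp: poly_altdef sum_distrib_right exp_minus field_simps sum_divide_distrib)
  ultimately show ?thesis by simp
qed

lemma flat_DERIV_pos:
  assumes "x > 0" shows "DERIV (flat p) x :> flat (flat_poly p) x"
proof -
  have ev: "eventually (\<lambda>s. flat p s = poly p (1/s) * exp (-1/s)) (nhds x)"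
    using eventually_nhds_in_open[of "{0<..}" x] assms
    by (auto elim!: eventually_mono simp: flat_def)
  have "DERIV (\<lambda>s. poly p (1/s) * exp (-1/s)) x :>
     poly (pderiv p) (1/x) * (- inverse (x^2)) * exp (-1/x) + poly p (1/x) * (exp (-1/x) * inverse (x^2))"
    using assms
    by (auto intro!: derivative_eq_intros DERIV_chain2[OF poly_DERIV] simp: field_simps power2_eq_square)
  moreover have "poly (pderiv p) (1/x) * (- inverse (x^2)) * exp (-1/x) + poly p (1/x) * (exp (-1/x) * inverse (x^2))
      = flat (flat_poly p) x"
    using assms by (simp add: flat_def flat_poly_def field_simps power2_eq_square)
  ultimately show ?thesis
    using DERIV_cong_ev[OF refl ev refl] by simp
qed

(* At 0 the difference quotient is p(1/h)(1/h) exp(-1/h) on the right and 0 on the left. *)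
lemma flat_DERIV_0: "DERIV (flat p) 0 :> flat (flat_poly p) 0"
proof -
  let ?q = "\<lambda>h. (flat p (0 + h) - flat p 0) / h"
  have "((\<lambda>y. poly (p * [:0,1:]) y * exp (-y)) \<longlongrightarrow> 0) at_top"
    by (rule poly_times_exp_tendsto_0)
  then have "((\<lambda>h. poly (p * [:0,1:]) (inverse h) * exp (- inverse h)) \<longlongrightarrow> 0) (at_right 0)"
    unfolding filterlim_at_top_to_right .
  moreover have "\<forall>\<^sub>F h in at_right 0. poly (p * [:0,1:]) (inverse h) * exp (- inverse h) = ?q h"
    by (rule eventually_mono[OF eventually_at_right_real[of 0 1]]) (auto simp: flat_def field_simps)
  ultimately have right: "(?q \<longlongrightarrow> 0) (at_right 0)"
    by (rule Lim_transform_eventually)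
  have "\<forall>\<^sub>F h in at_left 0. 0 = ?q h"
    by (rule eventually_mono[OF eventually_at_left_real[of "-1" 0]]) (auto simp: flat_def)
  then have left: "(?q \<longlongrightarrow> 0) (at_left 0)"
    by (rule Lim_transform_eventually[OF tendsto_const])
  have "flat (flat_poly p) 0 = 0" by (simp add: flat_def)
  then show ?thesis
    unfolding DERIV_def using filterlim_split_at[OF left right] by simp
qed

lemma flat_DERIV: "DERIV (flat p) x :> flat (flat_poly p) x"
proof -
  consider "x < 0" | "x = 0" | "x > 0" by linarith
  then show ?thesis
  proof cases
    case 1
    then have ev: "eventually (\<lambda>s. flat p s = 0) (nhds x)"
      using eventually_nhds_in_open[of "{..<0}" x] by (auto elim!: eventually_mono simp: flat_def)
    have "DERIV (\<lambda>_. 0) x :> 0" by simp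
    then have "DERIV (flat p) x :> 0"
      using DERIV_cong_ev[OF refl ev refl] by blast
    moreover have "flat (flat_poly p) x = 0" using 1 by (simp add: flat_def)
    ultimately show ?thesis by simp
  next
    case 2
    then show ?thesis using flat_DERIV_0 by simp
  next
    case 3
    then show ?thesis by (rule flat_DERIV_pos)
  qed
qed

lemma Ck_flat: "Ck k (flat p)"
proof (induction k arbitrary: p)
  case (Suc k)
  have "deriv (flat p) = flat (flat_poly p)" by (rule deriv_fun_eq) (rule flat_DERIV)
  then show ?case using Suc flat_DERIV real_differentiable_def by auto
qed simp

definition test_fun :: "(real \<Rightarrow> real) \<Rightarrow> bool" where
  "test_fun \<rho> \<longleftrightarrow> smooth \<rho> \<and> (\<forall>s. s \<le> 0 \<or> 1 \<le> s \<longrightarrow> \<rho> s = 0)"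

lemma DERIV_eventually_constant_zero:
  fixes f :: "real \<Rightarrow> real"
  assumes "DERIV f a :> D" and "F \<le> at 0" "F \<noteq> bot"
    and "eventually (\<lambda>h. f (a + h) = f a) F"
  shows "D = 0"
proof -
  have "((\<lambda>h. (f (a + h) - f a) / h) \<longlongrightarrow> D) F"
    using assms(1,2) by (simp add: DERIV_def tendsto_mono)
  moreover have "((\<lambda>h. (f (a + h) - f a) / h) \<longlongrightarrow> 0) F"
    by (rule Lim_transform_eventually[OF tendsto_const]) (auto intro: eventually_mono[OF assms(4)])
  ultimately show ?thesis using tendsto_unique assms(3) by blast
qed

lemma test_fun_deriv:
  assumes "test_fun \<rho>" shows "test_fun (deriv \<rho>)"
proof -
  have sm: "smooth \<rho>" and zero: "\<And>s. s \<le> 0 \<or> 1 \<le> s \<Longrightarrow> \<rho> s = 0"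
    using assms by (auto simp: test_fun_def)
  have "deriv \<rho> s = 0" if "s \<le> 0" for s
  proof (rule DERIV_eventually_constant_zero[OF smooth_DERIV[OF sm]])
    show "at_left 0 \<le> at (0::real)" "at_left 0 \<noteq> (bot :: real filter)"
      by (simp_all add: at_le)
    have "\<rho> (s + h) = \<rho> s" if "h < 0" for h
      using zero[of "s + h"] zero[of s] \<open>s \<le> 0\<close> that by simp
    then show "\<forall>\<^sub>F h in at_left 0. \<rho> (s + h) = \<rho> s"
      by (intro eventually_mono[OF eventually_at_left_real[of "-1" "0::real"]]) auto
  qed
  moreover have "deriv \<rho> s = 0" if "1 \<le> s" for s
  proof (rule DERIV_eventually_constant_zero[OF smooth_DERIV[OF sm]])
    show "at_right 0 \<le> at (0::real)" "at_right 0 \<noteq> (bot :: real filter)"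
      by (simp_all add: at_le)
    have "\<rho> (s + h) = \<rho> s" if "h > 0" for h
      using zero[of "s + h"] zero[of s] \<open>1 \<le> s\<close> that by simp
    then show "\<forall>\<^sub>F h in at_right 0. \<rho> (s + h) = \<rho> s"
      by (intro eventually_mono[OF eventually_at_right_real[of 0 "1::real"]]) auto
  qed
  ultimately show ?thesis
    using smooth_deriv[OF sm] by (auto simp: test_fun_def)
qed

lemma normalized_test_fun_exists: "\<exists>\<rho>. test_fun \<rho> \<and> integral {0..1} \<rho> = 1"
proof -
  define b where "b s = flat 1 s * flat 1 (-1 * s + 1)" for s
  have sm: "smooth b"
    unfolding smooth_def b_def by (intro allI Ck_mult Ck_flat Ck_affine)
  have zero: "b s = 0" if "s \<le> 0 \<or> 1 \<le> s" for s
    using that by (auto simp: b_def flat_def)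
  have nonneg: "b s \<ge> 0" for s
    by (auto simp: b_def flat_def)
  have cont: "continuous_on {0..1} b" by (rule smooth_continuous_on[OF sm])
  have int: "b integrable_on {0..1}" by (rule integrable_continuous_real[OF cont])
  have "integral {0..1} b \<noteq> 0"
  proof
    assume "integral {0..1} b = 0"
    then have "(b has_integral 0) (cbox 0 1)"
      using int by (metis box_real(2) has_integral_integral)
    then have "b (1/2) = 0"
      by (rule has_integral_0_cbox_imp_0[rotated 2]) (use cont nonneg in auto)
    then show False by (simp add: b_def flat_def)
  qed
  then have pos: "integral {0..1} b > 0"
    using integral_nonneg[OF int] nonneg by (simp add: order_less_le)
  define \<rho> where "\<rho> s = (1 / integral {0..1} b) * b s" for s
  have "smooth \<rho>"
    unfolding \<rho>_def[abs_def] by (rule smooth_cmult[OF sm])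
  then have "test_fun \<rho>"
    using zero by (simp add: test_fun_def \<rho>_def)
  moreover have "integral {0..1} \<rho> = 1"
    unfolding \<rho>_def[abs_def] integral_mult[OF int, symmetric] using pos by simp
  ultimately show ?thesis by blast
qed

section \<open>Functional-analytic tools\<close>

lemma bounded_linear_bound_from_ball:
  fixes L :: "'a::real_normed_vector \<Rightarrow> 'b::real_normed_vector"
  assumes L: "bounded_linear L" and r: "r > 0" and bound: "\<And>y. y \<in> ball x0 r \<Longrightarrow> norm (L y) \<le> c"
  shows "norm (L x) \<le> 4 * c / r * norm x"
proof (cases "x = 0")
  case False
  interpret L: bounded_linear L by (rule L)
  define s where "s = r / (2 * norm x)"
  have s: "s > 0" "s * norm x = r / 2"
    using r False by (auto simp: s_def)
  have in_ball: "x0 \<in> ball x0 r" "x0 + s *\<^sub>R x \<in> ball x0 r"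
    using r s by (auto simp: dist_norm)
  have "L x = (1/s) *\<^sub>R (L (x0 + s *\<^sub>R x) - L x0)"
    using s by (simp add: L.add L.scaleR)
  then have "norm (L x) = (1/s) * norm (L (x0 + s *\<^sub>R x) - L x0)"
    using s by simp
  also have "\<dots> \<le> (1/s) * (norm (L (x0 + s *\<^sub>R x)) + norm (L x0))"
    using s by (intro mult_left_mono norm_triangle_ineq4) auto
  also have "\<dots> \<le> (1/s) * (c + c)"
    using s bound[OF in_ball(1)] bound[OF in_ball(2)] by (intro mult_left_mono add_mono) auto
  also have "\<dots> = 4 * c / r * norm x"
    using r False by (simp add: s_def field_simps)
  finally show ?thesis .
qed (simp add: linear_0[OF bounded_linear.linear[OF L]])

lemma uniform_boundedness:
  fixes L :: "'i \<Rightarrow> 'a::banach \<Rightarrow> 'b::real_normed_vector"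
  assumes bl: "\<And>i. i \<in> I \<Longrightarrow> bounded_linear (L i)"
    and pointwise: "\<And>x. \<exists>c. \<forall>i\<in>I. norm (L i x) \<le> c"
  shows "\<exists>K. \<forall>i\<in>I. \<forall>x. norm (L i x) \<le> K * norm x"
proof -
  define S where "S n = {x. \<forall>i\<in>I. norm (L i x) \<le> real n}" for n :: nat
  have closed: "closed (S n)" for n
  proof -
    have "S n = (\<Inter>i\<in>I. {x. norm (L i x) \<le> real n})" by (auto simp: S_def)
    moreover have "closed {x. norm (L i x) \<le> real n}" if "i \<in> I" for i
      by (intro closed_Collect_le continuous_on_norm continuous_on_const
          bounded_linear.continuous_on[OF bl[OF that]] continuous_on_id)
    ultimately show ?thesis by (simp add: closed_INT)
  qed
  have "x \<in> \<Union>(range S)" for x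
  proof -
    obtain c where "\<forall>i\<in>I. norm (L i x) \<le> c" using pointwise by blast
    then have "x \<in> S (nat \<lceil>c\<rceil>)"
      by (auto simp: S_def intro: order_trans[OF _ real_nat_ceiling_ge[of c]])
    then show ?thesis by blast
  qed
  then have cover: "\<Union>(range S) = UNIV" by blast
  have "\<exists>n. interior (S n) \<noteq> {}"
  proof (rule ccontr)
    assume empty: "\<nexists>n. interior (S n) \<noteq> {}"
    have "euclidean interior_of \<Union>(range S) = {}"
    proof (rule Baire_category_alt)
      show "completely_metrizable_space (euclidean :: 'a topology) \<or>
          locally_compact_space (euclidean :: 'a topology) \<and> regular_space (euclidean :: 'a topology)"
        using completely_metrizable_space_euclidean by blast
      show "closedin euclidean U \<and> euclidean interior_of U = {}" if "U \<in> range S" for U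
      proof -
        from that obtain n where "U = S n" by blast
        then show ?thesis
          using closed[of n] empty by (simp add: closed_closedin[symmetric])
      qed
    qed simp
    then show False using cover by simp
  qed
  then obtain n x0 where "x0 \<in> interior (S n)" by blast
  then obtain r where "r > 0" "ball x0 r \<subseteq> S n"
    by (meson mem_interior)
  then have "norm (L i x) \<le> 4 * real n / r * norm x" if "i \<in> I" for i x
    by (intro bounded_linear_bound_from_ball[OF bl[OF that]]) (use that in \<open>auto simp: S_def\<close>)
  then show ?thesis by blast
qed

lemma contraction_right_inverse:
  fixes E :: "'a::banach \<Rightarrow> 'a"
  assumes E: "bounded_linear E" and contr: "\<And>x. norm (E x) \<le> q * norm x" and q: "0 \<le> q" "q < 1"
  shows "\<exists>N. bounded_linear N \<and> (\<forall>y. N y - E (N y) = y)"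
proof -
  interpret E: bounded_linear E by (rule E)
  have unique: "\<exists>!z. y + E z = z" for y
  proof (rule banach_fix_type[OF q])
    show "\<forall>a b. dist (y + E a) (y + E b) \<le> q * dist a b"
      using contr by (simp add: dist_norm E.diff[symmetric])
  qed
  define N where "N y = (THE z. y + E z = z)" for y
  have N_fix: "y + E (N y) = N y" for y
    unfolding N_def by (rule theI'[OF unique])
  have N_eq: "y + E z = z \<Longrightarrow> N y = z" for y z
    unfolding N_def by (rule the1_equality[OF unique])
  have "bounded_linear N"
  proof (rule bounded_linear_intro)
    fix a b
    have "(a + b) + E (N a + N b) = (a + E (N a)) + (b + E (N b))"
      by (simp add: E.add algebra_simps)
    then show "N (a + b) = N a + N b"
      by (intro N_eq) (simp only: N_fix)
  next
    fix r a
    have "r *\<^sub>R a + E (r *\<^sub>R N a) = r *\<^sub>R (a + E (N a))"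
      by (simp add: E.scaleR scaleR_add_right)
    then show "N (r *\<^sub>R a) = r *\<^sub>R N a"
      by (intro N_eq) (simp only: N_fix)
  next
    fix a
    have "norm (N a) \<le> norm a + norm (E (N a))"
      using norm_triangle_ineq[of a "E (N a)"] by (simp only: N_fix)
    also have "\<dots> \<le> norm a + q * norm (N a)" using contr[of "N a"] by simp
    finally show "norm (N a) \<le> norm a * (1 / (1 - q))"
      using q by (simp add: field_simps)
  qed
  moreover have "N y - E (N y) = y" for y
    using N_fix[of y] by (simp add: algebra_simps)
  ultimately show ?thesis by blast
qed

lemma bounded_linear_integral:
  fixes L :: "real \<Rightarrow> 'a::real_normed_vector \<Rightarrow> 'b::banach"
  assumes ab: "a \<le> b" and lin: "\<And>s. s \<in> {a..b} \<Longrightarrow> linear (L s)"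
    and bound: "\<And>s x. s \<in> {a..b} \<Longrightarrow> norm (L s x) \<le> C * norm x"
    and cont: "\<And>x. continuous_on {a..b} (\<lambda>s. L s x)"
  shows "bounded_linear (\<lambda>x. integral {a..b} (\<lambda>s. L s x))"
proof -
  have int: "(\<lambda>s. L s x) integrable_on {a..b}" for x
    using cont integrable_continuous_real by blast
  show ?thesis
  proof (rule bounded_linear_intro)
    fix x y
    have "integral {a..b} (\<lambda>s. L s (x + y)) = integral {a..b} (\<lambda>s. L s x + L s y)"
      by (rule integral_cong) (use lin in \<open>auto simp: linear_add\<close>)
    then show "integral {a..b} (\<lambda>s. L s (x + y)) = integral {a..b} (\<lambda>s. L s x) + integral {a..b} (\<lambda>s. L s y)"
      by (simp add: integral_add[OF int int])
  next
    fix r x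
    have "integral {a..b} (\<lambda>s. L s (r *\<^sub>R x)) = integral {a..b} (\<lambda>s. r *\<^sub>R L s x)"
      by (rule integral_cong) (use lin in \<open>auto simp: linear_scale\<close>)
    then show "integral {a..b} (\<lambda>s. L s (r *\<^sub>R x)) = r *\<^sub>R integral {a..b} (\<lambda>s. L s x)" by simp
  next
    fix x
    have "norm (integral {a..b} (\<lambda>s. L s x)) \<le> max C 0 * norm x * measure lborel (cbox a b)"
    proof (rule has_integral_bound)
      show "((\<lambda>s. L s x) has_integral integral {a..b} (\<lambda>s. L s x)) (cbox a b)"
        using int by (simp add: has_integral_integral)
      show "norm (L s x) \<le> max C 0 * norm x" if "s \<in> cbox a b" for s
      proof -
        have "C * norm x \<le> max C 0 * norm x" by (intro mult_right_mono) auto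
        then show ?thesis using bound[of s x] that by simp
      qed
    qed simp
    then show "norm (integral {a..b} (\<lambda>s. L s x)) \<le> norm x * (max C 0 * (b - a))"
      using ab by (simp add: mult_ac)
  qed
qed

lemma continuous_on_Icc_abs_bound:
  fixes w :: "real \<Rightarrow> real"
  assumes "continuous_on {a..b} w"
  obtains B where "B > 0" "\<And>s. s \<in> {a..b} \<Longrightarrow> \<bar>w s\<bar> \<le> B"
proof -
  have "bounded (w ` {a..b})"
    by (rule compact_imp_bounded[OF compact_continuous_image[OF assms compact_Icc]])
  then show ?thesis
    using that unfolding bounded_pos by auto
qed

lemma tendsto_at_right_0_I:
  fixes g :: "real \<Rightarrow> 'b::real_normed_vector"
  assumes "\<And>e. e > 0 \<Longrightarrow> \<exists>d>0. \<forall>h. 0 < h \<and> h < d \<longrightarrow> norm (g h - l) \<le> e"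
  shows "(g \<longlongrightarrow> l) (at_right 0)"
proof (rule tendstoI)
  fix e :: real assume "e > 0"
  then obtain d where "d > 0" "\<forall>h. 0 < h \<and> h < d \<longrightarrow> norm (g h - l) \<le> e/2"
    using assms[of "e/2"] by auto
  then show "eventually (\<lambda>h. dist (g h) l < e) (at_right 0)"
    using \<open>e > 0\<close> eventually_at_right_real[OF \<open>d > 0\<close>]
    by (auto elim!: eventually_mono simp: dist_norm)
qed

lemma bigo_antitone_bound:
  fixes f \<phi> :: "real \<Rightarrow> real"
  assumes bigo: "f \<in> O[at_top](\<phi>)" and pos: "\<forall>t>0. \<phi> t > 0"
    and anti: "\<forall>s t. 0 < s \<longrightarrow> s \<le> t \<longrightarrow> \<phi> t \<le> \<phi> s"
    and bound: "\<And>t. t \<ge> 1 \<Longrightarrow> \<bar>f t\<bar> \<le> C"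
  shows "\<exists>c. \<forall>t\<ge>1. \<bar>f t\<bar> \<le> c * \<phi> t"
proof -
  obtain c where "eventually (\<lambda>t. norm (f t) \<le> c * norm (\<phi> t)) at_top"
    using bigo by (rule landau_o.bigE)
  then obtain N where N: "\<And>t. t \<ge> N \<Longrightarrow> \<bar>f t\<bar> \<le> c * \<bar>\<phi> t\<bar>"
    by (auto simp: eventually_at_top_linorder)
  define N' where "N' = max N 1"
  have \<phi>N': "\<phi> N' > 0" using pos by (simp add: N'_def)
  have "\<bar>f t\<bar> \<le> max c (C / \<phi> N') * \<phi> t" if t: "t \<ge> 1" for t
  proof (cases "t \<ge> N'")
    case True
    have "\<phi> t > 0" using pos t by simp
    then have "\<bar>f t\<bar> \<le> c * \<phi> t"
      using N[of t] True by (simp add: N'_def)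
    also have "\<dots> \<le> max c (C / \<phi> N') * \<phi> t"
      using \<open>\<phi> t > 0\<close> by (intro mult_right_mono) auto
    finally show ?thesis .
  next
    case False
    then have "\<phi> N' \<le> \<phi> t" using anti t by simp
    have "\<bar>f t\<bar> \<le> C / \<phi> N' * \<phi> N'" using bound[OF t] \<phi>N' by simp
    also have "\<dots> \<le> C / \<phi> N' * \<phi> t"
      using \<open>\<phi> N' \<le> \<phi> t\<close> \<phi>N' bound[OF t] by (intro mult_left_mono) auto
    also have "\<dots> \<le> max c (C / \<phi> N') * \<phi> t"
      using \<phi>N' \<open>\<phi> N' \<le> \<phi> t\<close> by (intro mult_right_mono) auto
    finally show ?thesis .
  qed
  then show ?thesis by blast
qed

section \<open>Bounded C0-semigroups and their generators\<close>

locale bounded_c0_semigroup =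
  fixes T :: "real \<Rightarrow> ('a::banach \<Rightarrow>\<^sub>L 'a)"
  assumes c0: "c0_semigroup T" and bounded: "bounded_semigroup T"
begin

definition M :: real where
  "M = (SOME M. \<forall>s\<ge>0. norm (T s) \<le> M)"

lemma norm_T_le: "s \<ge> 0 \<Longrightarrow> norm (T s) \<le> M"
proof -
  have "\<exists>M. \<forall>s\<ge>0. norm (T s) \<le> M" using bounded unfolding bounded_semigroup_def .
  then have "\<forall>s\<ge>0. norm (T s) \<le> M" unfolding M_def by (rule someI_ex)
  then show "s \<ge> 0 \<Longrightarrow> norm (T s) \<le> M" by blast
qed

lemma M_nonneg: "M \<ge> 0"
  using norm_T_le[of 0] norm_ge_zero[of "T 0"] by linarith

lemma norm_T_apply_le: "s \<ge> 0 \<Longrightarrow> norm (T s x) \<le> M * norm x"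
  using norm_blinfun[of "T s" x] norm_T_le[of s] by (meson mult_right_mono norm_ge_zero order_trans)

lemma T_0 [simp]: "T 0 x = x"
  using c0 by (simp add: c0_semigroup_def)

lemma T_add: "s \<ge> 0 \<Longrightarrow> t \<ge> 0 \<Longrightarrow> T (s + t) x = T s (T t x)"
  using c0 by (simp add: c0_semigroup_def)

lemma T_commute: "s \<ge> 0 \<Longrightarrow> t \<ge> 0 \<Longrightarrow> T s (T t x) = T t (T s x)"
  by (metis T_add add.commute)

lemma T_continuous_on: "0 \<le> a \<Longrightarrow> continuous_on {a..b} (\<lambda>s. T s x)"
  using c0 unfolding c0_semigroup_def by (auto intro: continuous_on_subset)

lemma T_integrable: "0 \<le> a \<Longrightarrow> (\<lambda>s. T s x) integrable_on {a..b}"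
  by (rule integrable_continuous_real[OF T_continuous_on])

lemma T_continuous_on_compose: "continuous_on S g \<Longrightarrow> continuous_on S (\<lambda>s. T h (g s))"
  by (rule bounded_linear.continuous_on[OF blinfun.bounded_linear_right])

definition V :: "'a \<Rightarrow> real \<Rightarrow> 'a" where
  "V x u = integral {0..u} (\<lambda>s. T s x)"

lemma V_0 [simp]: "V x 0 = 0"
  by (simp add: V_def)

lemma cesaro_eq_V: "cesaro T t x = (1/t) *\<^sub>R V x t"
  by (simp add: cesaro_def V_def)

lemma V_diff: "0 \<le> a \<Longrightarrow> a \<le> b \<Longrightarrow> V x b - V x a = integral {a..b} (\<lambda>s. T s x)"
  unfolding V_def
  using Henstock_Kurzweil_Integration.integral_combine[of 0 a b "\<lambda>s. T s x"] T_integrable[where a=0 and b=b and x=x]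
  by (simp add: algebra_simps)

lemma V_bounded_linear: "u \<ge> 0 \<Longrightarrow> bounded_linear (\<lambda>x. V x u)"
  unfolding V_def
  by (rule bounded_linear_integral[where C = M])
     (simp_all add: norm_T_apply_le T_continuous_on bounded_linear.linear[OF blinfun.bounded_linear_right])

lemma norm_V_le:
  assumes "u \<ge> 0" shows "norm (V x u) \<le> M * u * norm x"
  using has_integral_bound[of "M * norm x" "\<lambda>s. T s x" "V x u" 0 u] T_integrable[where a=0 and b=u and x=x]
    norm_T_apply_le M_nonneg assms
  by (auto simp: V_def has_integral_integral mult_ac)

lemma V_continuous_on: "continuous_on {0..L} (V x)"
  unfolding V_def[abs_def] by (rule indefinite_integral_continuous_1) (simp add: T_integrable)

lemma V_has_vector_derivative:
  "s \<in> {0..b} \<Longrightarrow> (V x has_vector_derivative T s x) (at s within {0..b})"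
  unfolding V_def[abs_def] by (rule integral_has_vector_derivative[OF T_continuous_on]) simp_all

lemma T_V: "h \<ge> 0 \<Longrightarrow> s \<ge> 0 \<Longrightarrow> T h (V x s) = V x (s + h) - V x h"
proof -
  assume h: "h \<ge> 0" and s: "s \<ge> 0"
  have "T h (V x s) = integral {0..s} (\<lambda>r. T h (T r x))"
    unfolding V_def by (simp add: integral_blinfun_apply T_integrable)
  also have "\<dots> = integral {0..s} ((\<lambda>r. T r x) \<circ> (+) h)"
    by (rule integral_cong) (use h in \<open>simp add: T_add\<close>)
  also have "\<dots> = V x (s + h) - V x h"
    using h s by (simp add: integral_shift_Icc_real V_diff add.commute)
  finally show ?thesis .
qed

lemma V_T: "h \<ge> 0 \<Longrightarrow> V (T h x) s = T h (V x s)"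
  unfolding V_def integral_blinfun_apply[OF T_integrable[OF order_refl], symmetric]
  by (rule integral_cong) (simp add: T_commute)

definition dq :: "real \<Rightarrow> 'a \<Rightarrow> 'a" where
  "dq h x = (1/h) *\<^sub>R (T h x - x)"

(* (V x (s+h) - V x s)/h -> T(s) x uniformly for s in [0,L], by uniform continuity of the orbit. *)
lemma V_diff_quot_uniform:
  assumes "L \<ge> 0" "e > 0"
  shows "\<exists>d>0. \<forall>h. 0 < h \<and> h < d \<longrightarrow>
           (\<forall>s\<in>{0..L}. norm ((1/h) *\<^sub>R (V x (s + h) - V x s) - T s x) \<le> e)"
proof -
  have "uniformly_continuous_on {0..L+1} (\<lambda>s. T s x)"
    by (rule compact_uniformly_continuous) (auto intro: T_continuous_on)
  then obtain d where d: "d > 0"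
    "\<And>r s. r \<in> {0..L+1} \<Longrightarrow> s \<in> {0..L+1} \<Longrightarrow> dist r s < d \<Longrightarrow> dist (T r x) (T s x) < e"
    unfolding uniformly_continuous_on_def using \<open>e > 0\<close> by metis
  show ?thesis
  proof (intro exI[of _ "min d 1"] conjI allI impI ballI)
    show "min d 1 > 0" using d by simp
    fix h s assume h: "0 < h \<and> h < min d 1" and s: "s \<in> {0..L}"
    let ?I = "integral {s..s+h} (\<lambda>r. T r x - T s x)"
    have "V x (s + h) - V x s = integral {s..s+h} (\<lambda>r. T r x)"
      using h s by (intro V_diff) auto
    also have "\<dots> = ?I + h *\<^sub>R T s x"
      using h s by (subst integral_diff) (auto intro: T_integrable)
    finally have eq: "(1/h) *\<^sub>R (V x (s + h) - V x s) - T s x = (1/h) *\<^sub>R ?I"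
      using h by (simp add: scaleR_add_right)
    have "norm ?I \<le> e * measure lborel (cbox s (s+h))"
    proof (rule has_integral_bound)
      show "((\<lambda>r. T r x - T s x) has_integral ?I) (cbox s (s+h))"
        unfolding box_real(2) using s
        by (intro integrable_integral integrable_diff T_integrable integrable_const_ivl) auto
      show "norm (T r x - T s x) \<le> e" if "r \<in> cbox s (s+h)" for r
        using d(2)[of r s] that s h by (simp add: dist_norm dist_real_def)
    qed (use \<open>e > 0\<close> in simp)
    then have "norm ?I \<le> e * h" using h by simp
    then show "norm ((1/h) *\<^sub>R (V x (s + h) - V x s) - T s x) \<le> e"
      unfolding eq using h by (simp add: divide_le_eq mult.commute)
  qed
qed

lemma diff_quot_V_uniform:
  assumes "L \<ge> 0" "e > 0"
  shows "\<exists>d>0. \<forall>h. 0 < h \<and> h < d \<longrightarrow> (\<forall>s\<in>{0..L}. norm (dq h (V x s) - (T s x - x)) \<le> e)"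
proof -
  obtain d where d: "d > 0" "\<forall>h. 0 < h \<and> h < d \<longrightarrow>
      (\<forall>s\<in>{0..L}. norm ((1/h) *\<^sub>R (V x (s + h) - V x s) - T s x) \<le> e/2)"
    using V_diff_quot_uniform[OF assms(1), of "e/2" x] assms by auto
  show ?thesis
  proof (intro exI[of _ d] conjI allI impI ballI)
    fix h s assume h: "0 < h \<and> h < d" and s: "s \<in> {0..L}"
    let ?a = "(1/h) *\<^sub>R (V x (s + h) - V x s) - T s x"
    let ?b = "(1/h) *\<^sub>R (V x (0 + h) - V x 0) - T 0 x"
    have "dq h (V x s) - (T s x - x) = ?a - ?b"
      using h s by (simp add: dq_def T_V algebra_simps)
    also have "norm (?a - ?b) \<le> e/2 + e/2"
    proof -
      have "norm ?a \<le> e/2" "norm ?b \<le> e/2"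
        using h s assms(1) by (intro d(2)[rule_format]; simp)+
      then show ?thesis using norm_triangle_ineq4[of ?a ?b] by linarith
    qed
    finally show "norm (dq h (V x s) - (T s x - x)) \<le> e" by simp
  qed (use d in simp)
qed

lemma generatorI:
  assumes "((\<lambda>h. dq h x) \<longlongrightarrow> y) (at_right 0)"
  shows "x \<in> gen_dom T" "generator T x = y"
proof -
  have lim: "((\<lambda>h. (1/h) *\<^sub>R (T h x - x)) \<longlongrightarrow> y) (at_right 0)"
    using assms unfolding dq_def .
  then show "x \<in> gen_dom T" unfolding gen_dom_def by blast
  show "generator T x = y" unfolding generator_def
    by (rule tendsto_Lim[OF trivial_limit_at_right_real lim])
qed

lemma generator_tendsto:
  assumes "x \<in> gen_dom T" shows "((\<lambda>h. dq h x) \<longlongrightarrow> generator T x) (at_right 0)"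
proof -
  from assms obtain y where y: "((\<lambda>h. dq h x) \<longlongrightarrow> y) (at_right 0)"
    unfolding gen_dom_def dq_def by auto
  with generatorI(2)[OF y] show ?thesis by simp
qed

lemma generator_add:
  assumes "x \<in> gen_dom T" "y \<in> gen_dom T"
  shows "x + y \<in> gen_dom T" "generator T (x + y) = generator T x + generator T y"
proof -
  have "dq h (x + y) = dq h x + dq h y" for h
    by (simp add: dq_def blinfun.bilinear_simps algebra_simps)
  then have "((\<lambda>h. dq h (x + y)) \<longlongrightarrow> generator T x + generator T y) (at_right 0)"
    by (simp add: tendsto_add generator_tendsto assms)
  then show "x + y \<in> gen_dom T" "generator T (x + y) = generator T x + generator T y"
    by (rule generatorI)+
qed

lemma generator_diff:
  assumes "x \<in> gen_dom T" "y \<in> gen_dom T"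
  shows "x - y \<in> gen_dom T" "generator T (x - y) = generator T x - generator T y"
proof -
  have "dq h (x - y) = dq h x - dq h y" for h
    by (simp add: dq_def blinfun.bilinear_simps algebra_simps)
  then have "((\<lambda>h. dq h (x - y)) \<longlongrightarrow> generator T x - generator T y) (at_right 0)"
    by (simp add: tendsto_diff generator_tendsto assms)
  then show "x - y \<in> gen_dom T" "generator T (x - y) = generator T x - generator T y"
    by (rule generatorI)+
qed

lemma V_in_gen_dom:
  assumes "t \<ge> 0"
  shows "V x t \<in> gen_dom T" "generator T (V x t) = T t x - x"
proof -
  have "((\<lambda>h. dq h (V x t)) \<longlongrightarrow> T t x - x) (at_right 0)"
  proof (rule tendsto_at_right_0_I)
    fix e :: real assume "e > 0"
    then show "\<exists>d>0. \<forall>h. 0 < h \<and> h < d \<longrightarrow> norm (dq h (V x t) - (T t x - x)) \<le> e"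
      using diff_quot_V_uniform[OF assms, of e x] assms by fastforce
  qed
  then show "V x t \<in> gen_dom T" "generator T (V x t) = T t x - x"
    by (rule generatorI)+
qed

lemma V_generator:
  assumes x: "x \<in> gen_dom T" and t: "t \<ge> 0"
  shows "V (generator T x) t = T t x - x"
proof -
  have "((\<lambda>h. V (dq h x) t) \<longlongrightarrow> V (generator T x) t) (at_right 0)"
    using bounded_linear.tendsto[OF V_bounded_linear[OF t] generator_tendsto[OF x]] .
  moreover have "((\<lambda>h. V (dq h x) t) \<longlongrightarrow> T t x - x) (at_right 0)"
  proof (rule Lim_transform_eventually)
    show "((\<lambda>h. dq h (V x t)) \<longlongrightarrow> T t x - x) (at_right 0)"
      using generator_tendsto[OF V_in_gen_dom(1)[OF t]] V_in_gen_dom(2)[OF t] by simp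
    have "dq h (V x t) = V (dq h x) t" if "h > 0" for h
    proof -
      interpret V: bounded_linear "\<lambda>x. V x t" by (rule V_bounded_linear[OF t])
      show ?thesis using that by (simp add: dq_def V.scaleR V.diff V_T)
    qed
    then show "\<forall>\<^sub>F h in at_right 0. dq h (V x t) = V (dq h x) t"
      using eventually_at_right_less[of "0::real"] by (auto elim!: eventually_mono)
  qed
  ultimately show ?thesis
    by (rule tendsto_unique[OF trivial_limit_at_right_real])
qed

lemma generator_kernel_fixed:
  assumes "z \<in> gen_dom T" "generator T z = 0" "s \<ge> 0"
  shows "T s z = z"
  using V_generator[OF assms(1,3)] assms(2) by (simp add: V_def)

definition smoothing :: "(real \<Rightarrow> real) \<Rightarrow> real \<Rightarrow> 'a \<Rightarrow> 'a" where
  "smoothing w L x = integral {0..L} (\<lambda>s. w s *\<^sub>R V x s)"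

lemma smoothing_bounded_linear:
  assumes w: "continuous_on {0..L} w" and L: "L \<ge> 0"
  shows "bounded_linear (smoothing w L)"
proof -
  obtain B where B: "B > 0" "\<And>s. s \<in> {0..L} \<Longrightarrow> \<bar>w s\<bar> \<le> B"
    using continuous_on_Icc_abs_bound[OF w] by blast
  have "bounded_linear (\<lambda>x. integral {0..L} (\<lambda>s. w s *\<^sub>R V x s))"
  proof (rule bounded_linear_integral[where C = "B * M * L"])
    fix s :: real and x :: 'a assume s: "s \<in> {0..L}"
    have "norm (w s *\<^sub>R V x s) \<le> B * (M * s * norm x)"
      using B s norm_V_le[of s x] by (simp add: mult_mono)
    also have "\<dots> \<le> B * (M * L * norm x)"
      using B s M_nonneg by (intro mult_left_mono mult_right_mono) auto
    finally show "norm (w s *\<^sub>R V x s) \<le> B * M * L * norm x" by (simp add: mult_ac)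
    show "linear (\<lambda>x. w s *\<^sub>R V x s)"
      using s by (intro bounded_linear.linear bounded_linear_compose[OF bounded_linear_scaleR_right]
          V_bounded_linear) simp
  qed (auto intro: continuous_on_scaleR w V_continuous_on L)
  then show ?thesis unfolding smoothing_def[abs_def] .
qed

lemma dq_smoothing:
  assumes w: "continuous_on {0..L} w"
  shows "dq h (smoothing w L x) = integral {0..L} (\<lambda>s. w s *\<^sub>R dq h (V x s))"
proof -
  have int: "(\<lambda>s. w s *\<^sub>R V x s) integrable_on {0..L}"
    by (intro integrable_continuous_real continuous_on_scaleR w V_continuous_on)
  have int_T: "(\<lambda>s. w s *\<^sub>R T h (V x s)) integrable_on {0..L}"
    by (intro integrable_continuous_real continuous_on_scaleR w
        T_continuous_on_compose V_continuous_on)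
  have "T h (smoothing w L x) = integral {0..L} (\<lambda>s. w s *\<^sub>R T h (V x s))"
    unfolding smoothing_def integral_blinfun_apply[OF int, symmetric]
    by (simp add: blinfun.scaleR_right)
  then have "dq h (smoothing w L x)
      = (1/h) *\<^sub>R integral {0..L} (\<lambda>s. w s *\<^sub>R T h (V x s) - w s *\<^sub>R V x s)"
    unfolding dq_def by (simp only: smoothing_def integral_diff[OF int_T int])
  also have "\<dots> = integral {0..L} (\<lambda>s. w s *\<^sub>R dq h (V x s))"
    unfolding integral_cmul[symmetric] by (rule integral_cong) (simp add: dq_def algebra_simps)
  finally show ?thesis .
qed

(* The difference quotients of smoothing w L x converge by the uniform convergence
   of diff_quot_V_uniform under the integral. *)
lemma smoothing_in_gen_dom:
  assumes w: "continuous_on {0..L} w" and L: "L \<ge> 0"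
  shows "smoothing w L x \<in> gen_dom T"
    "generator T (smoothing w L x) = integral {0..L} (\<lambda>s. w s *\<^sub>R (T s x - x))"
proof -
  obtain B where B: "B > 0" "\<And>s. s \<in> {0..L} \<Longrightarrow> \<bar>w s\<bar> \<le> B"
    using continuous_on_Icc_abs_bound[OF w] by blast
  let ?G = "integral {0..L} (\<lambda>s. w s *\<^sub>R (T s x - x))"
  have "((\<lambda>h. dq h (smoothing w L x)) \<longlongrightarrow> ?G) (at_right 0)"
  proof (rule tendsto_at_right_0_I)
    fix e :: real assume e: "e > 0"
    define \<epsilon> where "\<epsilon> = e / (B * (L + 1))"
    have \<epsilon>: "\<epsilon> > 0" using e B L by (simp add: \<epsilon>_def)
    obtain d where d: "d > 0"
      "\<forall>h. 0 < h \<and> h < d \<longrightarrow> (\<forall>s\<in>{0..L}. norm (dq h (V x s) - (T s x - x)) \<le> \<epsilon>)"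
      using diff_quot_V_uniform[OF L \<epsilon>, of x] by blast
    have "norm (dq h (smoothing w L x) - ?G) \<le> e" if h: "0 < h \<and> h < d" for h
    proof -
      let ?f = "\<lambda>s. w s *\<^sub>R (dq h (V x s) - (T s x - x))"
      have int_dq: "(\<lambda>s. w s *\<^sub>R dq h (V x s)) integrable_on {0..L}"
        unfolding dq_def by (intro integrable_continuous_real continuous_on_scaleR w
            continuous_on_const continuous_on_diff T_continuous_on_compose V_continuous_on)
      have int_T: "(\<lambda>s. w s *\<^sub>R (T s x - x)) integrable_on {0..L}"
        by (intro integrable_continuous_real continuous_on_scaleR w continuous_on_diff
            continuous_on_const T_continuous_on order_refl)
      have "dq h (smoothing w L x) - ?G = integral {0..L} ?f"
        unfolding dq_smoothing[OF w] integral_diff[OF int_dq int_T, symmetric]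
        by (simp add: scaleR_diff_right)
      also have "norm \<dots> \<le> (B * \<epsilon>) * measure lborel (cbox 0 L)"
      proof (rule has_integral_bound)
        show "(?f has_integral integral {0..L} ?f) (cbox 0 L)"
          using integrable_diff[OF int_dq int_T]
          by (simp add: has_integral_integral scaleR_diff_right)
        show "norm (?f s) \<le> B * \<epsilon>" if "s \<in> cbox 0 L" for s
          using that B d h \<epsilon> by (auto intro!: mult_mono)
      qed (use B \<epsilon> in simp)
      also have "\<dots> \<le> B * \<epsilon> * (L + 1)" using B \<epsilon> L by simp
      also have "\<dots> = e" unfolding \<epsilon>_def using B L by simp
      finally show ?thesis .
    qed
    then show "\<exists>d>0. \<forall>h. 0 < h \<and> h < d \<longrightarrow> norm (dq h (smoothing w L x) - ?G) \<le> e"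
      using d(1) by blast
  qed
  then show "smoothing w L x \<in> gen_dom T" "generator T (smoothing w L x) = ?G"
    by (rule generatorI)+
qed

lemma integral_scaleR_const:
  fixes w :: "real \<Rightarrow> real"
  assumes "continuous_on {a..b} w"
  shows "integral {a..b} (\<lambda>s. w s *\<^sub>R x) = integral {a..b} w *\<^sub>R x"
  by (rule integral_unique[OF has_integral_scaleR_left[OF
        integrable_integral[OF integrable_continuous_real[OF assms]]]])

lemma generator_smoothing:
  assumes w: "continuous_on {0..L} w" and L: "L \<ge> 0"
  shows "generator T (smoothing w L x) = integral {0..L} (\<lambda>s. w s *\<^sub>R T s x) - integral {0..L} w *\<^sub>R x"
proof -
  have "integral {0..L} (\<lambda>s. w s *\<^sub>R (T s x - x))
      = integral {0..L} (\<lambda>s. w s *\<^sub>R T s x) - integral {0..L} (\<lambda>s. w s *\<^sub>R x)"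
    unfolding scaleR_diff_right
    by (intro integral_diff integrable_continuous_real continuous_on_scaleR w
        T_continuous_on continuous_on_const order_refl)
  then show ?thesis
    using smoothing_in_gen_dom(2)[OF w L] integral_scaleR_const[OF w] by simp
qed

definition mollify :: "(real \<Rightarrow> real) \<Rightarrow> 'a \<Rightarrow> 'a" where
  "mollify \<rho> x = integral {0..1} (\<lambda>s. \<rho> s *\<^sub>R T s x)"

lemma mollify_bounded_linear:
  assumes \<rho>: "continuous_on {0..1} \<rho>"
  shows "bounded_linear (mollify \<rho>)"
proof -
  obtain B where B: "B > 0" "\<And>s. s \<in> {0..1} \<Longrightarrow> \<bar>\<rho> s\<bar> \<le> B"
    using continuous_on_Icc_abs_bound[OF \<rho>] by blast
  have "bounded_linear (\<lambda>x. integral {0..1} (\<lambda>s. \<rho> s *\<^sub>R T s x))"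
  proof (rule bounded_linear_integral[where C = "B * M"])
    fix s :: real and x :: 'a assume s: "s \<in> {0..1}"
    show "norm (\<rho> s *\<^sub>R T s x) \<le> B * M * norm x"
      using B s norm_T_apply_le[of s x] by (simp add: mult.assoc mult_mono)
    show "linear (\<lambda>x. \<rho> s *\<^sub>R T s x)"
      by (intro linearI) (simp_all add: blinfun.bilinear_simps scaleR_add_right)
  qed (auto intro: continuous_on_scaleR \<rho> T_continuous_on)
  then show ?thesis unfolding mollify_def[abs_def] .
qed

lemma mollify_by_parts:
  assumes d: "\<And>s. (\<rho> has_real_derivative \<rho>' s) (at s)" and c: "continuous_on {0..1} \<rho>'"
    and "\<rho> 1 = 0"
  shows "mollify \<rho> x = smoothing (\<lambda>s. - \<rho>' s) 1 x"
proof -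
  have c\<rho>: "continuous_on {0..1} \<rho>"
    by (intro continuous_at_imp_continuous_on ballI DERIV_isCont[OF d])
  have "((\<lambda>s. \<rho> s *\<^sub>R T s x + \<rho>' s *\<^sub>R V x s) has_integral \<rho> 1 *\<^sub>R V x 1 - \<rho> 0 *\<^sub>R V x 0) {0..1}"
  proof (rule fundamental_theorem_of_calculus)
    fix s :: real assume s: "s \<in> {0..1}"
    show "((\<lambda>s. \<rho> s *\<^sub>R V x s) has_vector_derivative \<rho> s *\<^sub>R T s x + \<rho>' s *\<^sub>R V x s)
        (at s within {0..1})"
      using has_vector_derivative_scaleR[OF has_field_derivative_at_within[OF d]
          V_has_vector_derivative[OF s]] .
  qed simp
  then have "integral {0..1} (\<lambda>s. \<rho> s *\<^sub>R T s x + \<rho>' s *\<^sub>R V x s) = 0"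
    using \<open>\<rho> 1 = 0\<close> by (simp add: integral_unique)
  moreover have "integral {0..1} (\<lambda>s. \<rho> s *\<^sub>R T s x + \<rho>' s *\<^sub>R V x s)
      = mollify \<rho> x + integral {0..1} (\<lambda>s. \<rho>' s *\<^sub>R V x s)"
    unfolding mollify_def
    by (intro integral_add integrable_continuous_real continuous_on_scaleR c\<rho> c
        T_continuous_on V_continuous_on order_refl)
  ultimately show ?thesis
    by (simp add: smoothing_def eq_neg_iff_add_eq_0)
qed

lemma mollify_in_gen_dom:
  assumes d: "\<And>s. (\<rho> has_real_derivative \<rho>' s) (at s)" and c: "continuous_on {0..1} \<rho>'"
    and "\<rho> 0 = 0" "\<rho> 1 = 0"
  shows "mollify \<rho> x \<in> gen_dom T" "- generator T (mollify \<rho> x) = mollify \<rho>' x"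
proof -
  have c': "continuous_on {0..1} (\<lambda>s. - \<rho>' s)" by (intro continuous_on_minus c)
  show "mollify \<rho> x \<in> gen_dom T"
    unfolding mollify_by_parts[OF d c \<open>\<rho> 1 = 0\<close>] by (rule smoothing_in_gen_dom(1)[OF c']) simp
  have "integral {0..1} \<rho>' = \<rho> 1 - \<rho> 0"
  proof (rule integral_unique, rule fundamental_theorem_of_calculus)
    show "(\<rho> has_vector_derivative \<rho>' s) (at s within {0..1})" for s
      using d has_field_derivative_at_within has_real_derivative_iff_has_vector_derivative by blast
  qed simp
  then show "- generator T (mollify \<rho> x) = mollify \<rho>' x"
    unfolding mollify_by_parts[OF d c \<open>\<rho> 1 = 0\<close>] generator_smoothing[OF c' zero_le_one]
    using \<open>\<rho> 0 = 0\<close> \<open>\<rho> 1 = 0\<close> by (simp add: mollify_def)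
qed

lemma mollify_dom_pow: "test_fun \<rho> \<Longrightarrow> mollify \<rho> x \<in> dom_pow (gen_dom T) (\<lambda>x. - generator T x) n"
proof (induction n arbitrary: \<rho>)
  case (Suc n)
  have sm: "smooth \<rho>" and zero: "\<rho> 0 = 0" "\<rho> 1 = 0"
    using Suc.prems by (auto simp: test_fun_def)
  note mollify = mollify_in_gen_dom[OF smooth_DERIV[OF sm] smooth_continuous_on[OF smooth_deriv[OF sm]] zero]
  have "mollify (deriv \<rho>) x \<in> dom_pow (gen_dom T) (\<lambda>x. - generator T x) n"
    using Suc.IH[OF test_fun_deriv[OF Suc.prems]] .
  then show ?case using mollify by simp
qed simp

lemma mollify_dom_inf: "test_fun \<rho> \<Longrightarrow> mollify \<rho> x \<in> dom_inf (gen_dom T) (\<lambda>x. - generator T x)"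
  unfolding dom_inf_def using mollify_dom_pow by blast

lemma cesaro_bounded_linear: "t > 0 \<Longrightarrow> bounded_linear (cesaro T t)"
  unfolding cesaro_eq_V[abs_def]
  by (intro bounded_linear_compose[OF bounded_linear_scaleR_right] V_bounded_linear) simp

lemma norm_cesaro_le:
  assumes t: "t > 0" shows "norm (cesaro T t x) \<le> M * norm x"
proof -
  have "norm (V x t) \<le> (M * norm x) * t" using norm_V_le[of t x] t by (simp add: mult_ac)
  then show ?thesis using t by (simp add: cesaro_eq_V pos_divide_le_eq)
qed

subsection \<open>Invertibility of the generator\<close>

lemma approximate_inverse:
  assumes \<rho>: "continuous_on {0..1} \<rho>" "integral {0..1} \<rho> = 1" and t: "t > 0"
  shows "smoothing \<rho> 1 z + smoothing (\<lambda>_. 1/t) t (mollify \<rho> z) \<in> gen_dom T"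
    "- generator T (smoothing \<rho> 1 z + smoothing (\<lambda>_. 1/t) t (mollify \<rho> z))
       = z - cesaro T t (mollify \<rho> z)"
proof -
  have c: "continuous_on {0..t} (\<lambda>_. 1/t)" by simp
  note dom1 = smoothing_in_gen_dom(1)[OF \<rho>(1) zero_le_one, of z]
  note dom2 = smoothing_in_gen_dom(1)[OF c less_imp_le[OF t], of "mollify \<rho> z"]
  have gen1: "generator T (smoothing \<rho> 1 z) = mollify \<rho> z - z"
    using generator_smoothing[OF \<rho>(1) zero_le_one] \<rho>(2) by (simp add: mollify_def)
  have gen2: "generator T (smoothing (\<lambda>_. 1/t) t (mollify \<rho> z)) = cesaro T t (mollify \<rho> z) - mollify \<rho> z"
    using generator_smoothing[OF c less_imp_le[OF t]] t by (simp add: cesaro_def)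
  show "smoothing \<rho> 1 z + smoothing (\<lambda>_. 1/t) t (mollify \<rho> z) \<in> gen_dom T"
    by (rule generator_add(1)[OF dom1 dom2])
  show "- generator T (smoothing \<rho> 1 z + smoothing (\<lambda>_. 1/t) t (mollify \<rho> z))
       = z - cesaro T t (mollify \<rho> z)"
    unfolding generator_add(2)[OF dom1 dom2] gen1 gen2 by simp
qed

(* If C_t J_rho is a strict contraction, A is injective: kernel vectors are T-fixed,
   hence fixed by C_t J_rho. *)
lemma generator_injective:
  assumes \<rho>: "continuous_on {0..1} \<rho>" "integral {0..1} \<rho> = 1" and t: "t > 0"
    and contr: "\<And>x. norm (cesaro T t (mollify \<rho> x)) \<le> q * norm x" "q < 1"
    and z: "z \<in> gen_dom T" "generator T z = 0"
  shows "z = 0"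
proof -
  have fixed: "T s z = z" if "s \<ge> 0" for s
    using generator_kernel_fixed[OF z that] .
  have "mollify \<rho> z = integral {0..1} (\<lambda>s. \<rho> s *\<^sub>R z)"
    unfolding mollify_def by (rule integral_cong) (simp add: fixed)
  then have "mollify \<rho> z = z"
    using integral_scaleR_const[OF \<rho>(1)] \<rho>(2) by simp
  moreover have "integral {0..t} (\<lambda>s. T s z) = integral {0..t} (\<lambda>s. z)"
    by (rule integral_cong) (simp add: fixed)
  then have "cesaro T t z = z"
    using t by (simp add: cesaro_def)
  ultimately have "norm z \<le> q * norm z"
    using contr(1)[of z] by simp
  then show "z = 0"
    using contr(2) by (metis mult_le_cancel_right1 norm_ge_zero norm_le_zero_iff not_le)
qed

lemma generator_invertible:
  assumes \<rho>: "continuous_on {0..1} \<rho>" "integral {0..1} \<rho> = 1" and t: "t > 0"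
    and contr: "\<And>x. norm (cesaro T t (mollify \<rho> x)) \<le> q * norm x" "0 \<le> q" "q < 1"
  shows "\<exists>B :: 'a \<Rightarrow>\<^sub>L 'a. (\<forall>y. B y \<in> gen_dom T \<and> - generator T (B y) = y)
                         \<and> (\<forall>x \<in> gen_dom T. B (- generator T x) = x)"
proof -
  define E where "E x = cesaro T t (mollify \<rho> x)" for x
  define Q where "Q z = smoothing \<rho> 1 z + smoothing (\<lambda>_. 1/t) t (mollify \<rho> z)" for z
  have "bounded_linear E"
    unfolding E_def[abs_def]
    by (rule bounded_linear_compose[OF cesaro_bounded_linear[OF t] mollify_bounded_linear[OF \<rho>(1)]])
  then obtain N where N: "bounded_linear N" "\<And>y. N y - E (N y) = y"
    using contraction_right_inverse[of E q] contr unfolding E_def by blast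
  have "bounded_linear Q"
    unfolding Q_def[abs_def]
    by (intro bounded_linear_add smoothing_bounded_linear[OF \<rho>(1)] bounded_linear_compose[OF
        smoothing_bounded_linear mollify_bounded_linear[OF \<rho>(1)]]) (use t in auto)
  define B where "B = Blinfun (\<lambda>y. Q (N y))"
  have B: "B y = Q (N y)" for y
    unfolding B_def using bounded_linear_compose[OF \<open>bounded_linear Q\<close> N(1)]
    by (simp add: bounded_linear_Blinfun_apply)
  have right: "B y \<in> gen_dom T \<and> - generator T (B y) = y" for y
    using approximate_inverse[OF \<rho> t, of "N y"] N(2)[of y] by (simp add: B Q_def E_def)
  have left: "B (- generator T x) = x" if x: "x \<in> gen_dom T" for x
  proof -
    have dom: "B (- generator T x) \<in> gen_dom T"
      and gen: "generator T (B (- generator T x)) = generator T x"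
      using right[of "- generator T x"] by auto
    have "B (- generator T x) - x = 0"
    proof (rule generator_injective[OF \<rho> t contr(1,3)])
      show "B (- generator T x) - x \<in> gen_dom T" by (rule generator_diff(1)[OF dom x])
      show "generator T (B (- generator T x) - x) = 0"
        using generator_diff(2)[OF dom x] gen by simp
    qed
    then show ?thesis by simp
  qed
  show ?thesis using right left by blast
qed

(* The Cesaro decay hypothesis gives norm (C_t J_rho) <= K phi(t) for t >= 1, by uniform boundedness
   applied to the family C_t J_rho / phi(t). *)
lemma cesaro_mollify_bound:
  assumes \<rho>: "test_fun \<rho>"
    and pos: "\<forall>t>0. \<phi> t > 0" and anti: "\<forall>s t. 0 < s \<longrightarrow> s \<le> t \<longrightarrow> \<phi> t \<le> \<phi> s"
    and bigo: "\<forall>x \<in> dom_inf (gen_dom T) (\<lambda>x. - generator T x).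
                 (\<lambda>t. norm (cesaro T t x)) \<in> O[at_top](\<phi>)"
  shows "\<exists>K. \<forall>t\<ge>1. \<forall>x. norm (cesaro T t (mollify \<rho> x)) \<le> K * \<phi> t * norm x"
proof -
  have c\<rho>: "continuous_on {0..1} \<rho>"
    using \<rho> by (simp add: test_fun_def smooth_continuous_on)
  define L where "L t x = (1 / \<phi> t) *\<^sub>R cesaro T t (mollify \<rho> x)" for t x
  have "bounded_linear (L t)" if "t \<in> {1..}" for t
    unfolding L_def[abs_def] using that
    by (intro bounded_linear_compose[OF bounded_linear_scaleR_right] bounded_linear_compose[OF
        cesaro_bounded_linear mollify_bounded_linear[OF c\<rho>]]) auto
  moreover have "\<exists>c. \<forall>t\<in>{1..}. norm (L t x) \<le> c" for x
  proof -
    have "\<exists>c. \<forall>t\<ge>1. \<bar>norm (cesaro T t (mollify \<rho> x))\<bar> \<le> c * \<phi> t"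
      using bigo mollify_dom_inf[OF \<rho>] norm_cesaro_le pos anti
      by (intro bigo_antitone_bound[where C = "M * norm (mollify \<rho> x)"]) auto
    then obtain c where c: "\<forall>t\<ge>1. norm (cesaro T t (mollify \<rho> x)) \<le> c * \<phi> t" by auto
    have "norm (L t x) \<le> c" if "t \<ge> 1" for t
    proof -
      have "\<phi> t > 0" using pos that by simp
      then show ?thesis using c that by (simp add: L_def pos_divide_le_eq)
    qed
    then show ?thesis by auto
  qed
  ultimately obtain K where K: "\<forall>t\<in>{1..}. \<forall>x. norm (L t x) \<le> K * norm x"
    using uniform_boundedness[of "{1..}" L] by blast
  have "norm (cesaro T t (mollify \<rho> x)) \<le> K * \<phi> t * norm x" if "t \<ge> 1" for t x
  proof -
    have "\<phi> t > 0" using pos that by simp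
    moreover have "norm (L t x) \<le> K * norm x" using K that by simp
    ultimately show ?thesis by (simp add: L_def pos_divide_le_eq mult_ac)
  qed
  then show ?thesis by blast
qed

end

theorem theoremA1:
  fixes T :: "real \<Rightarrow> ('a::banach \<Rightarrow>\<^sub>L 'a)"
    and \<phi> :: "real \<Rightarrow> real"
  defines "A \<equiv> (\<lambda>x. - generator T x)"
  assumes "c0_semigroup T"
    and "bounded_semigroup T"
    and "\<forall>t>0. \<phi> t > 0"
    and "\<forall>s t. 0 < s \<longrightarrow> s \<le> t \<longrightarrow> \<phi> t \<le> \<phi> s"
    and "(\<phi> \<longlongrightarrow> 0) at_top"
    and "\<forall>x \<in> dom_inf (gen_dom T) A. (\<lambda>t. norm (cesaro T t x)) \<in> O[at_top](\<phi>)"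
  shows "\<exists>B :: 'a \<Rightarrow>\<^sub>L 'a. (\<forall>y. blinfun_apply B y \<in> gen_dom T \<and> A (blinfun_apply B y) = y)
                          \<and> (\<forall>x \<in> gen_dom T. blinfun_apply B (A x) = x)"
proof -
  interpret bounded_c0_semigroup T using assms(2,3) by unfold_locales
  obtain \<rho> where \<rho>: "test_fun \<rho>" "integral {0..1} \<rho> = 1"
    using normalized_test_fun_exists by blast
  obtain K where K: "\<And>t x. t \<ge> 1 \<Longrightarrow> norm (cesaro T t (mollify \<rho> x)) \<le> K * \<phi> t * norm x"
    using cesaro_mollify_bound[OF \<rho>(1) assms(4,5)] assms(7) unfolding A_def by blast
  have "\<forall>\<^sub>F t in at_top. t \<ge> 1 \<and> \<phi> t < 1 / (2 * (\<bar>K\<bar> + 1))"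
    using eventually_ge_at_top order_tendstoD(2)[OF assms(6)] by (auto intro: eventually_conj)
  then obtain t where t: "t \<ge> 1" "\<phi> t < 1 / (2 * (\<bar>K\<bar> + 1))"
    using eventually_happens'[OF trivial_limit_at_top_linorder] by blast
  have "K * \<phi> t \<le> 1/2"
  proof -
    have "\<phi> t > 0" using assms(4) t(1) by simp
    then have "K * \<phi> t \<le> (\<bar>K\<bar> + 1) * \<phi> t"
      by (intro mult_right_mono) auto
    also have "\<dots> < (\<bar>K\<bar> + 1) * (1 / (2 * (\<bar>K\<bar> + 1)))"
      using t(2) by (intro mult_strict_left_mono) auto
    also have "\<dots> = 1/2" by simp
    finally show ?thesis by simp
  qed
  then have "norm (cesaro T t (mollify \<rho> x)) \<le> 1/2 * norm x" for x
    using K[OF t(1), of x] mult_right_mono[OF \<open>K * \<phi> t \<le> 1/2\<close> norm_ge_zero, of x] by linarith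
  then show ?thesis
    using generator_invertible[OF smooth_continuous_on \<rho>(2), of t "1/2"] \<rho>(1) t(1)
    unfolding A_def test_fun_def by simp
qed

end
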